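(* Let $n\ge1$, let $\mathcal{S}$ be a discrete subgroup of $O(n+1)$ satisfying the spanning property, and let $f$ be an $\mathcal{S}$-invariant function on $\mathbb{S}^n$ with $c_1\le f\le c_2$ for positive constants $c_1,c_2$. For $p<-n-1$ let $h^{(p)}$ be the $\mathcal{S}$-invariant solution of $\det(\nabla^2h+hI)=fh^{p-1}$ on $\mathbb{S}^n$ that maximizes $V$ over $\mathcal{K}_p(\mathcal{S})$. Then $$\lim_{p\to-\infty}\min_{\mathbb{S}^n}h^{(p)}=1.$$
   Context: $\mathcal{K}_p(\mathcal{S})=\{\Omega\in\mathcal{K}_0(\mathcal{S}):\int_{\mathbb{S}^n}fh_\Omega^p=\int_{\mathbb{S}^n}f\}$, $\mathcal{K}_0(\mathcal{S})$ the $\mathcal{S}$-invariant convex bodies in $\mathbb{R}^{n+1}$ containing the origin, $h_\Omega$ the support function, $V(\Omega)=(n+1)|\Omega|$. Spanning property: for every $a\in\mathbb{S}^n$, $\mathrm{conv}\{\phi(a):\phi\in\mathcal{S}\}$ is a non-degenerate $(n+1)$-dimensional polytope. *)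

theory Defs
  imports "HOL-Analysis.Analysis"
begin

text \<open>Ambient space: a Euclidean space 'a of dimension n+1 (n = DIM('a) - 1).
  The unit sphere S^n is sphere 0 1.\<close>

definition orth_subgroup :: "('a::euclidean_space \<Rightarrow> 'a) set \<Rightarrow> bool" where
  "orth_subgroup S \<longleftrightarrow>
     (\<forall>\<phi>\<in>S. orthogonal_transformation \<phi>) \<and> id \<in> S \<and>
     (\<forall>\<phi>\<in>S. \<forall>\<psi>\<in>S. \<phi> \<circ> \<psi> \<in> S) \<and> (\<forall>\<phi>\<in>S. inv \<phi> \<in> S)"

definition discrete_orth_subgroup :: "('a::euclidean_space \<Rightarrow> 'a) set \<Rightarrow> bool" where
  "discrete_orth_subgroup S \<longleftrightarrow> orth_subgroup S \<and>
     (\<exists>\<epsilon>>0. \<forall>\<phi>\<in>S. \<phi> \<noteq> id \<longrightarrow> onorm (\<lambda>x. \<phi> x - x) \<ge> \<epsilon>)"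

definition spanning_property :: "('a::euclidean_space \<Rightarrow> 'a) set \<Rightarrow> bool" where
  "spanning_property S \<longleftrightarrow>
     (\<forall>a\<in>sphere 0 1. polytope (convex hull {\<phi> a | \<phi>. \<phi> \<in> S}) \<and>
        aff_dim (convex hull {\<phi> a | \<phi>. \<phi> \<in> S}) = int DIM('a))"

definition support_fun :: "'a::euclidean_space set \<Rightarrow> 'a \<Rightarrow> real" where
  "support_fun \<Omega> x = (SUP y\<in>\<Omega>. x \<bullet> y)"

definition convex_body :: "'a::euclidean_space set \<Rightarrow> bool" where
  "convex_body \<Omega> \<longleftrightarrow> compact \<Omega> \<and> convex \<Omega> \<and> interior \<Omega> \<noteq> {}"

definition K0 :: "('a::euclidean_space \<Rightarrow> 'a) set \<Rightarrow> 'a set set" where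
  "K0 S = {\<Omega>. convex_body \<Omega> \<and> 0 \<in> \<Omega> \<and> (\<forall>\<phi>\<in>S. \<phi> ` \<Omega> = \<Omega>)}"

text \<open>Integration over the sphere S^n (up to a positive constant factor, which is irrelevant
  for the defining identity of K_p): via the cone measure,
  int_{S^n} g d sigma = (n+1) * int_{ball 0 1} g(x/|x|) dx.\<close>
definition sphere_int :: "('a::euclidean_space \<Rightarrow> ennreal) \<Rightarrow> ennreal" where
  "sphere_int g = (\<integral>\<^sup>+ x. g (x /\<^sub>R norm x) * indicator (ball 0 1) x \<partial>lborel)"

definition pow_ext :: "real \<Rightarrow> real \<Rightarrow> ennreal" where
  "pow_ext t p = (if t = 0 \<and> p < 0 then \<infinity> else ennreal (t powr p))"

definition Kp :: "('a::euclidean_space \<Rightarrow> 'a) set \<Rightarrow> ('a \<Rightarrow> real) \<Rightarrow> real \<Rightarrow> 'a set set" where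
  "Kp S f p = {\<Omega>\<in>K0 S.
     sphere_int (\<lambda>u. ennreal (f u) * pow_ext (support_fun \<Omega> u) p) = sphere_int (\<lambda>u. ennreal (f u))}"

definition V :: "'a::euclidean_space set \<Rightarrow> real" where
  "V \<Omega> = real DIM('a) * measure lebesgue \<Omega>"

definition is_V_maximizer :: "('a::euclidean_space \<Rightarrow> 'a) set \<Rightarrow> ('a \<Rightarrow> real) \<Rightarrow> real \<Rightarrow> 'a set \<Rightarrow> bool" where
  "is_V_maximizer S f p \<Omega> \<longleftrightarrow> \<Omega> \<in> Kp S f p \<and> (\<forall>\<Omega>'\<in>Kp S f p. V \<Omega>' \<le> V \<Omega>)"

end

theory Submission
  imports Defs "HOL-Real_Asymp.Real_Asymp"
begin

text \<open>The spanning
  property puts \<open>0\<close> into the convex hull of every orbit, and by compactness there is \<open>\<eta> > 0\<close> such that every direction \<open>u\<close> satisfies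
  \<open>u \<bullet> \<phi> a > \<eta>\<close> for some \<open>\<phi> \<in> S\<close>, whatever \<open>a\<close> is. So a point \<open>y \<in> \<Omega>\<close> forces
  \<open>h \<ge> \<eta> |y|\<close> everywhere, and \<open>\<integral> f h\<^sup>p = \<integral> f\<close> bounds \<open>|y|\<close> by \<open>R = c\<^sub>2 / (c\<^sub>1 \<eta>)\<close>
  uniformly in \<open>p\<close>. For \<open>m = min h\<close>, the bound \<open>h \<ge> m\<close> gives \<open>c\<^sub>1 \<le> c\<^sub>2 m\<^sup>p\<close>, i.e.
  \<open>m \<le> (c\<^sub>1/c\<^sub>2)\<^bsup>1/p\<^esup>\<close>. Conversely \<open>h\<close> is \<open>R\<close>-Lipschitz, so \<open>h \<le> m + 4Rr\<close> on a cap of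
  directions of size \<open>r\<close> around a minimiser; that cap alone contributes
  \<open>c\<^sub>1 (m + 4Rr)\<^sup>p r\<^bsup>n+1\<^esup> \<le> c\<^sub>2\<close> (in units of the volume of the unit ball).
  With \<open>r = 1/|p|\<close> both bounds on \<open>m\<close> tend to \<open>1\<close>.\<close>

abbreviation orbit :: "('a \<Rightarrow> 'a) set \<Rightarrow> 'a \<Rightarrow> 'a set" where
  "orbit S a \<equiv> {\<phi> a | \<phi>. \<phi> \<in> S}"

lemma orth_subgroupD:
  assumes "orth_subgroup S" "\<phi> \<in> S"
  shows "orthogonal_transformation \<phi>" "linear \<phi>" "inv \<phi> \<in> S" "\<psi> \<in> S \<Longrightarrow> \<phi> \<circ> \<psi> \<in> S"
  using assms by (auto simp: orth_subgroup_def orthogonal_transformation)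

lemma orth_subgroup_self_in_orbit:
  assumes "orth_subgroup S"
  shows "a \<in> orbit S a"
  using assms by (auto simp: orth_subgroup_def intro!: exI[of _ id])

lemma spanning_fixed_point_eq_0:
  assumes "orth_subgroup S" "spanning_property S" and fixed: "\<And>\<psi>. \<psi> \<in> S \<Longrightarrow> \<psi> z = z"
  shows "z = 0"
proof (rule ccontr)
  assume "z \<noteq> 0"
  define a where "a = z /\<^sub>R norm z"
  have a: "a \<in> sphere 0 1" using \<open>z \<noteq> 0\<close> by (simp add: a_def)
  have "\<phi> a = a" if "\<phi> \<in> S" for \<phi>
    using fixed[OF that] orth_subgroupD(2)[OF assms(1) that] by (simp add: a_def linear_scale)
  then have "orbit S a = {a}" using orth_subgroup_self_in_orbit[OF assms(1)] by blast
  moreover have "aff_dim (convex hull orbit S a) = int DIM('a)"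
    using assms(2) a by (simp add: spanning_property_def)
  ultimately show False by simp
qed

lemma convex_hull_orbit_invariant:
  assumes "orth_subgroup S" "\<psi> \<in> S"
  shows "\<psi> ` (convex hull orbit S u) \<subseteq> convex hull orbit S u"
proof -
  have "\<psi> ` orbit S u \<subseteq> orbit S u"
  proof
    fix x assume "x \<in> \<psi> ` orbit S u"
    then obtain \<phi> where "\<phi> \<in> S" "x = (\<psi> \<circ> \<phi>) u" by auto
    moreover have "\<psi> \<circ> \<phi> \<in> S" using orth_subgroupD(4)[OF assms \<open>\<phi> \<in> S\<close>] .
    ultimately show "x \<in> orbit S u" by blast
  qed
  then have "convex hull (\<psi> ` orbit S u) \<subseteq> convex hull orbit S u"
    by (rule hull_mono)
  then show ?thesis
    by (simp add: convex_hull_linear_image[OF orth_subgroupD(2)[OF assms]])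
qed

text \<open>The point of the orbit polytope closest to the origin is unique, hence fixed by \<open>S\<close>.\<close>
lemma zero_in_convex_hull_orbit:
  assumes S: "orth_subgroup S" "spanning_property S" and u: "u \<in> sphere 0 1"
  shows "0 \<in> convex hull orbit S u"
proof -
  define K where "K = convex hull orbit S u"
  define z where "z = closest_point K 0"
  have "convex K" by (simp add: K_def)
  have "polytope K" using S(2) u by (simp add: spanning_property_def K_def)
  then have "closed K" by (simp add: polytope_imp_closed)
  moreover have "K \<noteq> {}"
    using orth_subgroup_self_in_orbit[OF S(1)] by (auto simp: K_def hull_inc)
  ultimately have "z \<in> K"
    unfolding z_def by (rule closest_point_in_set)
  have "\<psi> z = z" if \<psi>: "\<psi> \<in> S" for \<psi>
  proof -
    have ot: "orthogonal_transformation \<psi>" by (rule orth_subgroupD(1)[OF S(1) \<psi>])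
    have "\<psi> z \<in> K"
      using convex_hull_orbit_invariant[OF S(1) \<psi>] \<open>z \<in> K\<close> by (auto simp: K_def)
    moreover have "\<forall>y\<in>K. dist 0 (\<psi> z) \<le> dist 0 y"
      using closest_point_le[OF \<open>closed K\<close>, of _ 0] orthogonal_transformation_norm[OF ot]
      by (simp add: z_def dist_norm)
    ultimately show "\<psi> z = z"
      unfolding z_def by (rule closest_point_unique[OF \<open>convex K\<close> \<open>closed K\<close>])
  qed
  then have "z = 0"
    by (rule spanning_fixed_point_eq_0[OF S])
  then show ?thesis using \<open>z \<in> K\<close> by (simp add: K_def)
qed

lemma zero_in_convex_hull_nonpos_inner:
  fixes A B :: "'a::euclidean_space set"
  assumes "0 \<in> convex hull A" "0 \<notin> A" and nonpos: "\<And>v b. v \<in> A \<Longrightarrow> b \<in> B \<Longrightarrow> v \<bullet> b \<le> 0"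
  shows "\<exists>v\<in>A. v \<noteq> 0 \<and> (\<forall>b\<in>B. v \<bullet> b = 0)"
proof -
  obtain T w where T: "finite T" "T \<subseteq> A" "\<forall>v\<in>T. 0 \<le> w v" "sum w T = 1"
    and comb: "(\<Sum>v\<in>T. w v *\<^sub>R v) = 0"
    using assms(1) unfolding convex_hull_explicit by blast
  have "\<exists>v\<in>T. 0 < w v"
  proof (rule ccontr)
    assume "\<not> (\<exists>v\<in>T. 0 < w v)"
    then have "sum w T \<le> 0" by (intro sum_nonpos) (simp add: not_less)
    then show False using T(4) by simp
  qed
  then obtain v0 where v0: "v0 \<in> T" "0 < w v0" by blast
  have "v0 \<bullet> b = 0" if b: "b \<in> B" for b
  proof -
    have terms: "0 \<le> - (w v * (v \<bullet> b))" if "v \<in> T" for v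
    proof -
      have "0 \<le> w v" using T(3) that by blast
      moreover have "v \<bullet> b \<le> 0" using nonpos T(2) that b by blast
      ultimately show ?thesis by (simp add: mult_nonneg_nonpos)
    qed
    have "(\<Sum>v\<in>T. - (w v * (v \<bullet> b))) = - ((\<Sum>v\<in>T. w v *\<^sub>R v) \<bullet> b)"
      by (simp add: inner_sum_left sum_negf)
    also have "\<dots> = 0" unfolding comb by simp
    finally have "- (w v0 * (v0 \<bullet> b)) = 0"
      using sum_nonneg_eq_0_iff[OF T(1) terms] v0(1) by simp
    then show ?thesis using v0(2) by simp
  qed
  moreover have "v0 \<in> A" "v0 \<noteq> 0" using assms(2) T(2) v0(1) by auto
  ultimately show ?thesis by blast
qed

text \<open>Otherwise \<open>\<psi> u \<bullet> \<xi> a = u \<bullet> (inv \<psi> \<circ> \<xi>) a \<le> 0\<close> for all \<open>\<psi>, \<xi> \<in> S\<close>, and writing \<open>0\<close> as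
  a convex combination of the orbit of \<open>u\<close> puts the orbit of \<open>a\<close> into a hyperplane.\<close>
lemma orbit_meets_open_halfspace:
  assumes S: "orth_subgroup S" "spanning_property S"
    and u: "u \<in> sphere 0 1" and a: "a \<in> sphere 0 1"
  shows "\<exists>\<phi>\<in>S. 0 < u \<bullet> \<phi> a"
proof (rule ccontr)
  assume "\<not> ?thesis"
  then have neg: "\<forall>\<phi>\<in>S. u \<bullet> \<phi> a \<le> 0" by (simp add: not_less)
  have nonpos: "\<psi> u \<bullet> \<xi> a \<le> 0" if "\<psi> \<in> S" "\<xi> \<in> S" for \<psi> \<xi>
  proof -
    have "inv \<psi> \<circ> \<xi> \<in> S"
      using orth_subgroupD(3,4)[OF S(1)] that by blast
    then have "u \<bullet> inv \<psi> (\<xi> a) \<le> 0"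
      using neg by fastforce
    moreover have ot: "orthogonal_transformation \<psi>" by (rule orth_subgroupD(1)[OF S(1) that(1)])
    then have "\<psi> u \<bullet> \<psi> (inv \<psi> (\<xi> a)) = u \<bullet> inv \<psi> (\<xi> a)"
      by (simp add: orthogonal_transformation_def)
    ultimately show ?thesis
      using orthogonal_transformation_surj[OF ot] by (simp add: surj_f_inv_f)
  qed
  have "0 \<notin> orbit S u"
  proof
    assume "0 \<in> orbit S u"
    then obtain \<phi> where "\<phi> \<in> S" "\<phi> u = 0" by auto
    then show False
      using u orthogonal_transformation_norm[OF orth_subgroupD(1)[OF S(1)], of \<phi> u] by simp
  qed
  moreover have "v \<bullet> b \<le> 0" if "v \<in> orbit S u" "b \<in> orbit S a" for v b
    using that nonpos by blast
  ultimately obtain v where "v \<noteq> 0" and v: "\<forall>b\<in>orbit S a. v \<bullet> b = 0"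
    using zero_in_convex_hull_nonpos_inner[OF zero_in_convex_hull_orbit[OF S u]] by blast
  have "orbit S a \<subseteq> {x. v \<bullet> x = 0}" using v by blast
  then have "convex hull orbit S a \<subseteq> {x. v \<bullet> x = 0}"
    by (rule hull_minimal) (simp add: convex_hyperplane)
  then have "aff_dim (convex hull orbit S a) \<le> aff_dim {x. v \<bullet> x = 0}"
    by (rule aff_dim_subset)
  also have "\<dots> = int DIM('a) - 1" using \<open>v \<noteq> 0\<close> by simp
  finally show False using S(2) a by (simp add: spanning_property_def)
qed

lemma open_Collect_inner_linear_gt:
  fixes \<phi> :: "'a::euclidean_space \<Rightarrow> 'a"
  assumes "linear \<phi>"
  shows "open {q :: 'a \<times> 'a. t < snd q \<bullet> \<phi> (fst q)}"
proof -
  have "continuous_on UNIV \<phi>"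
    using assms by (simp add: linear_continuous_on linear_conv_bounded_linear)
  then have "continuous_on UNIV (\<phi> \<circ> fst)"
    by (intro continuous_on_compose continuous_on_fst) (auto intro: continuous_on_subset)
  then have "continuous_on UNIV (\<lambda>q :: 'a \<times> 'a. snd q \<bullet> \<phi> (fst q))"
    by (intro continuous_intros) (simp add: o_def)
  then show ?thesis by (rule open_Collect_less[OF continuous_on_const])
qed

lemma orbit_meets_halfspace_uniformly:
  assumes S: "orth_subgroup S" "spanning_property S"
  obtains \<eta> where "0 < \<eta>"
    and "\<And>a u. a \<in> sphere 0 1 \<Longrightarrow> u \<in> sphere 0 1 \<Longrightarrow> \<exists>\<phi>\<in>S. \<eta> < u \<bullet> \<phi> a"
proof -
  define F where "F = (\<lambda>(\<phi>, t). {q :: 'a \<times> 'a. t < snd q \<bullet> \<phi> (fst q)})"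
  have "open (F c)" if c: "c \<in> S \<times> {0<..}" for c
  proof -
    obtain \<phi> t where c: "c = (\<phi>, t)" "\<phi> \<in> S" using c by (cases c) auto
    show ?thesis
      unfolding F_def c by (simp add: open_Collect_inner_linear_gt orth_subgroupD(2)[OF S(1) c(2)])
  qed
  moreover have "sphere 0 1 \<times> sphere 0 1 \<subseteq> (\<Union>c\<in>S \<times> {0<..}. F c)"
  proof clarify
    fix a u :: 'a assume "a \<in> sphere 0 1" "u \<in> sphere 0 1"
    then obtain \<phi> where "\<phi> \<in> S" "0 < u \<bullet> \<phi> a"
      using orbit_meets_open_halfspace[OF S] by blast
    then show "(a, u) \<in> (\<Union>c\<in>S \<times> {0<..}. F c)"
      by (intro UN_I[of "(\<phi>, u \<bullet> \<phi> a / 2)"]) (auto simp: F_def)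
  qed
  ultimately obtain C where C: "C \<subseteq> S \<times> {0<..}" "finite C"
    and cover: "sphere 0 1 \<times> sphere 0 1 \<subseteq> (\<Union>c\<in>C. F c)"
    using compactE_image[OF compact_Times[OF compact_sphere compact_sphere]] by metis
  define \<eta> where "\<eta> = Min (insert 1 (snd ` C))"
  show thesis
  proof
    show "0 < \<eta>" unfolding \<eta>_def using C by (subst Min_gr_iff) auto
    fix a u :: 'a assume "a \<in> sphere 0 1" "u \<in> sphere 0 1"
    then have "(a, u) \<in> (\<Union>c\<in>C. F c)" using cover by blast
    then obtain \<phi> t where "(\<phi>, t) \<in> C" "(a, u) \<in> F (\<phi>, t)"
      by (metis UN_E surj_pair)
    then have "t < u \<bullet> \<phi> a" by (simp add: F_def)
    moreover have "\<eta> \<le> t" unfolding \<eta>_def using C(2) \<open>(\<phi>, t) \<in> C\<close> by (intro Min_le) force+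
    ultimately show "\<exists>\<phi>\<in>S. \<eta> < u \<bullet> \<phi> a" using C(1) \<open>(\<phi>, t) \<in> C\<close> by force
  qed
qed

lemma support_fun_ge_inner:
  assumes "bounded \<Omega>" "y \<in> \<Omega>"
  shows "u \<bullet> y \<le> support_fun \<Omega> u"
proof -
  have "bdd_above ((\<lambda>y. u \<bullet> y) ` \<Omega>)"
    using assms(1) by (intro bounded_imp_bdd_above bounded_linear_image bounded_linear_inner_right)
  then show ?thesis unfolding support_fun_def using assms(2) by (simp add: cSUP_upper)
qed

lemma support_fun_nonneg:
  assumes "bounded \<Omega>" "0 \<in> \<Omega>"
  shows "0 \<le> support_fun \<Omega> u"
  using support_fun_ge_inner[OF assms, of u] by simp

lemma support_fun_lipschitz:
  assumes "\<Omega> \<noteq> {}" and R: "\<And>y. y \<in> \<Omega> \<Longrightarrow> norm y \<le> R"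
  shows "support_fun \<Omega> u \<le> support_fun \<Omega> u0 + R * norm (u - u0)"
  unfolding support_fun_def
proof (rule cSUP_least[OF assms(1)])
  fix y assume y: "y \<in> \<Omega>"
  have "bounded \<Omega>" using R by (auto simp: bounded_iff)
  have "u \<bullet> y = u0 \<bullet> y + (u - u0) \<bullet> y" by (simp add: inner_diff_left)
  also have "(u - u0) \<bullet> y \<le> norm (u - u0) * R"
    using norm_cauchy_schwarz[of "u - u0" y] R[OF y] by (meson mult_left_mono norm_ge_zero order_trans)
  also have "u0 \<bullet> y \<le> support_fun \<Omega> u0" by (rule support_fun_ge_inner[OF \<open>bounded \<Omega>\<close> y])
  finally show "u \<bullet> y \<le> (SUP y\<in>\<Omega>. u0 \<bullet> y) + R * norm (u - u0)"
    by (simp add: support_fun_def mult.commute)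
qed

lemma K0D:
  assumes "\<Omega> \<in> K0 S"
  shows "bounded \<Omega>" "0 \<in> \<Omega>" "\<Omega> \<noteq> {}" "\<phi> \<in> S \<Longrightarrow> \<phi> ` \<Omega> = \<Omega>"
  using assms by (auto simp: K0_def convex_body_def compact_imp_bounded)

lemma K0_support_fun_ge_norm:
  assumes "orth_subgroup S" "\<Omega> \<in> K0 S" "y \<in> \<Omega>"
    and \<eta>: "\<And>a. a \<in> sphere 0 1 \<Longrightarrow> \<exists>\<phi>\<in>S. \<eta> < u \<bullet> \<phi> a"
  shows "norm y * \<eta> \<le> support_fun \<Omega> u"
proof (cases "y = 0")
  case True
  then show ?thesis using support_fun_nonneg K0D[OF assms(2)] by simp
next
  case False
  define a where "a = y /\<^sub>R norm y"
  obtain \<phi> where \<phi>: "\<phi> \<in> S" "\<eta> < u \<bullet> \<phi> a"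
    using \<eta>[of a] False by (auto simp: a_def)
  have "\<phi> y = norm y *\<^sub>R \<phi> a"
    using False orth_subgroupD(2)[OF assms(1) \<phi>(1)] by (simp add: a_def linear_scale)
  moreover have "\<phi> y \<in> \<Omega>" using K0D(4)[OF assms(2) \<phi>(1)] assms(3) by blast
  ultimately have "norm y * (u \<bullet> \<phi> a) \<le> support_fun \<Omega> u"
    using support_fun_ge_inner[OF K0D(1)[OF assms(2)]] by fastforce
  moreover have "norm y * \<eta> \<le> norm y * (u \<bullet> \<phi> a)" using \<phi>(2) by (simp add: mult_left_mono)
  ultimately show ?thesis by linarith
qed

lemma sphere_int_mono:
  assumes "\<And>u. u \<in> sphere 0 1 \<Longrightarrow> g u \<le> g' u"
  shows "sphere_int g \<le> sphere_int g'"
  unfolding sphere_int_def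
proof (rule nn_integral_mono_AE)
  show "AE x in lborel. g (x /\<^sub>R norm x) * indicator (ball 0 1) x \<le> g' (x /\<^sub>R norm x) * indicator (ball 0 1) x"
    using AE_lborel_singleton[of 0]
  proof eventually_elim
    case (elim x)
    then have "g (x /\<^sub>R norm x) \<le> g' (x /\<^sub>R norm x)" by (intro assms) simp
    then show ?case by (simp add: mult_right_mono)
  qed
qed

lemma sphere_int_const:
  assumes "0 \<le> c"
  shows "sphere_int (\<lambda>_::'a::euclidean_space. ennreal c) = ennreal (c * unit_ball_vol DIM('a))"
  using assms unfolding sphere_int_def
  by (simp add: nn_integral_cmult_indicator emeasure_ball ennreal_mult)

lemma ball_half_unit_directions:
  fixes x u0 :: "'a::real_normed_vector"
  assumes u0: "norm u0 = 1" and r: "0 < r" "r \<le> 1/4" and x: "x \<in> ball (u0 /\<^sub>R 2) r"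
  shows "x \<noteq> 0" "norm x < 1" "norm (x /\<^sub>R norm x - u0) \<le> 4 * r"
proof -
  have d: "norm (x - u0 /\<^sub>R 2) < r" using x by (simp add: dist_norm norm_minus_commute)
  then have nx: "\<bar>norm x - 1/2\<bar> < r"
    using norm_triangle_ineq3[of x "u0 /\<^sub>R 2"] u0 by simp
  then show "x \<noteq> 0" "norm x < 1" using r by auto
  have "x /\<^sub>R norm x - 2 *\<^sub>R x = (1 / norm x - 2) *\<^sub>R x" by (simp add: algebra_simps divide_inverse)
  then have "norm (x /\<^sub>R norm x - 2 *\<^sub>R x) = \<bar>1 - 2 * norm x\<bar>"
    using \<open>x \<noteq> 0\<close> by (simp add: abs_mult[symmetric] field_simps)
  also have "\<dots> \<le> 2 * r" using nx by linarith
  finally have "norm (x /\<^sub>R norm x - 2 *\<^sub>R x) \<le> 2 * r" .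
  moreover have "2 *\<^sub>R x - u0 = 2 *\<^sub>R (x - u0 /\<^sub>R 2)" by (simp add: algebra_simps)
  then have "norm (2 *\<^sub>R x - u0) \<le> 2 * r" using d by simp
  ultimately show "norm (x /\<^sub>R norm x - u0) \<le> 4 * r"
    using norm_triangle_ineq[of "x /\<^sub>R norm x - 2 *\<^sub>R x" "2 *\<^sub>R x - u0"] by simp
qed

text \<open>The directions of the points of the ball \<open>B(u0/2, r)\<close>, which lies in the unit ball, stay
  within \<open>4 r\<close> of \<open>u0\<close>; so the cap of directions contributes at least the volume of that ball.\<close>
lemma sphere_int_ge_cap:
  fixes u0 :: "'a::euclidean_space"
  assumes u0: "norm u0 = 1" and r: "0 < r" "r \<le> 1/4" and "0 \<le> c"
    and cap: "\<And>u. u \<in> sphere 0 1 \<Longrightarrow> norm (u - u0) \<le> 4 * r \<Longrightarrow> ennreal c \<le> g u"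
  shows "ennreal (c * r ^ DIM('a) * unit_ball_vol DIM('a)) \<le> sphere_int g"
proof -
  have "ennreal (c * r ^ DIM('a) * unit_ball_vol DIM('a))
      = (\<integral>\<^sup>+ x. ennreal c * indicator (ball (u0 /\<^sub>R 2) r) x \<partial>lborel)"
    using r \<open>0 \<le> c\<close> by (simp add: nn_integral_cmult_indicator emeasure_ball ennreal_mult mult_ac)
  also have "\<dots> \<le> sphere_int g"
    unfolding sphere_int_def
  proof (rule nn_integral_mono)
    fix x :: 'a
    show "ennreal c * indicator (ball (u0 /\<^sub>R 2) r) x \<le> g (x /\<^sub>R norm x) * indicator (ball 0 1) x"
    proof (cases "x \<in> ball (u0 /\<^sub>R 2) r")
      case True
      note x = ball_half_unit_directions[OF u0 r True]
      have "ennreal c \<le> g (x /\<^sub>R norm x)" using x by (intro cap) auto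
      then show ?thesis using True x(2) by simp
    qed simp
  qed
  finally show ?thesis .
qed

lemma pow_ext_le_powr:
  assumes "0 < c" "c \<le> s" "p < 0"
  shows "pow_ext s p \<le> ennreal (c powr p)"
  using assms by (simp add: pow_ext_def powr_mono2' ennreal_leI)

lemma powr_le_pow_ext:
  assumes "0 \<le> s" "s \<le> t" "0 < t" "p < 0"
  shows "ennreal (t powr p) \<le> pow_ext s p"
  using assms by (cases "s = 0") (simp_all add: pow_ext_def powr_mono2' ennreal_leI)

lemma KpD:
  assumes "\<Omega> \<in> Kp S f p"
  shows "\<Omega> \<in> K0 S"
    and "sphere_int (\<lambda>u. ennreal (f u) * pow_ext (support_fun \<Omega> u) p) = sphere_int (\<lambda>u. ennreal (f u))"
  using assms by (simp_all add: Kp_def)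

lemma le_powr_inverse_if_le_powr:
  fixes a c p :: real
  assumes "p < 0" "0 < c" "0 < a" "a \<le> c powr p"
  shows "c \<le> a powr (1 / p)"
proof -
  have "c = (c powr p) powr (1 / p)" using assms by (simp add: powr_powr)
  also have "\<dots> \<le> a powr (1 / p)" using assms by (intro powr_mono2') auto
  finally show ?thesis .
qed

lemma powr_inverse_le_if_powr_le:
  fixes a t p :: real
  assumes "p < 0" "0 < t" "t powr p \<le> a"
  shows "a powr (1 / p) \<le> t"
proof -
  have "a powr (1 / p) \<le> (t powr p) powr (1 / p)" using assms by (intro powr_mono2') auto
  also have "\<dots> = t" using assms by (simp add: powr_powr)
  finally show ?thesis .
qed

lemma le_of_bounds_on_sphere:
  fixes f :: "'a::euclidean_space \<Rightarrow> real"
  assumes "\<And>u. u \<in> sphere 0 1 \<Longrightarrow> c1 \<le> f u \<and> f u \<le> c2"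
  shows "c1 \<le> c2"
proof -
  obtain b :: 'a where "b \<in> Basis" using nonempty_Basis by blast
  then have "b \<in> sphere 0 1" by simp
  then show ?thesis using assms by force
qed

lemma Kp_bound_if_support_fun_ge:
  fixes \<Omega> :: "'a::euclidean_space set"
  assumes \<Omega>: "\<Omega> \<in> Kp S f p" and "p < 0" "0 < c"
    and hc: "\<And>u. u \<in> sphere 0 1 \<Longrightarrow> c \<le> support_fun \<Omega> u"
    and "0 < c1" and f: "\<And>u. u \<in> sphere 0 1 \<Longrightarrow> c1 \<le> f u \<and> f u \<le> c2"
  shows "c1 \<le> c2 * c powr p"
proof -
  have "0 \<le> c2" using le_of_bounds_on_sphere[where f=f, OF f] \<open>0 < c1\<close> by linarith
  have "ennreal (c1 * unit_ball_vol DIM('a)) = sphere_int (\<lambda>_::'a. ennreal c1)"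
    using \<open>0 < c1\<close> by (simp add: sphere_int_const)
  also have "\<dots> \<le> sphere_int (\<lambda>u. ennreal (f u))"
    using f by (intro sphere_int_mono ennreal_leI) auto
  also have "\<dots> = sphere_int (\<lambda>u. ennreal (f u) * pow_ext (support_fun \<Omega> u) p)"
    using KpD(2)[OF \<Omega>] by simp
  also have "\<dots> \<le> sphere_int (\<lambda>_::'a. ennreal (c2 * c powr p))"
  proof (rule sphere_int_mono)
    fix u :: 'a assume u: "u \<in> sphere 0 1"
    have "ennreal (f u) * pow_ext (support_fun \<Omega> u) p \<le> ennreal c2 * ennreal (c powr p)"
      using f[OF u] hc[OF u] \<open>p < 0\<close> \<open>0 < c\<close> by (intro mult_mono ennreal_leI pow_ext_le_powr) auto
    then show "ennreal (f u) * pow_ext (support_fun \<Omega> u) p \<le> ennreal (c2 * c powr p)"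
      using \<open>0 \<le> c2\<close> by (simp add: ennreal_mult)
  qed
  also have "\<dots> = ennreal (c2 * c powr p * unit_ball_vol DIM('a))"
    using \<open>0 \<le> c2\<close> by (simp add: sphere_int_const)
  finally have "c1 * unit_ball_vol DIM('a) \<le> c2 * c powr p * unit_ball_vol DIM('a)"
    using \<open>0 \<le> c2\<close> by (simp add: ennreal_le_iff)
  then show ?thesis using unit_ball_vol_pos[of "DIM('a)"] by simp
qed

lemma Kp_bound_if_support_fun_le_on_cap:
  fixes \<Omega> :: "'a::euclidean_space set"
  assumes \<Omega>: "\<Omega> \<in> Kp S f p" and "p < 0" "0 < t"
    and u0: "norm u0 = 1" and r: "0 < r" "r \<le> 1/4"
    and ht: "\<And>u. u \<in> sphere 0 1 \<Longrightarrow> norm (u - u0) \<le> 4 * r \<Longrightarrow> support_fun \<Omega> u \<le> t"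
    and "0 < c1" and f: "\<And>u. u \<in> sphere 0 1 \<Longrightarrow> c1 \<le> f u \<and> f u \<le> c2"
  shows "c1 * t powr p * r ^ DIM('a) \<le> c2"
proof -
  have "0 \<le> c2" using le_of_bounds_on_sphere[where f=f, OF f] \<open>0 < c1\<close> by linarith
  note K0 = K0D[OF KpD(1)[OF \<Omega>]]
  have "ennreal (c1 * t powr p * r ^ DIM('a) * unit_ball_vol DIM('a))
      \<le> sphere_int (\<lambda>u. ennreal (f u) * pow_ext (support_fun \<Omega> u) p)"
  proof (rule sphere_int_ge_cap[OF u0 r])
    fix u :: 'a assume u: "u \<in> sphere 0 1" "norm (u - u0) \<le> 4 * r"
    have "ennreal c1 * ennreal (t powr p) \<le> ennreal (f u) * pow_ext (support_fun \<Omega> u) p"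
      using f[OF u(1)] ht[OF u] support_fun_nonneg[OF K0(1,2)] \<open>p < 0\<close> \<open>0 < t\<close>
      by (intro mult_mono ennreal_leI powr_le_pow_ext) auto
    then show "ennreal (c1 * t powr p) \<le> ennreal (f u) * pow_ext (support_fun \<Omega> u) p"
      using \<open>0 < c1\<close> by (simp add: ennreal_mult)
  qed (use \<open>0 < c1\<close> in simp)
  also have "\<dots> = sphere_int (\<lambda>u. ennreal (f u))"
    by (rule KpD(2)[OF \<Omega>])
  also have "\<dots> \<le> sphere_int (\<lambda>_::'a. ennreal c2)"
    using f by (intro sphere_int_mono ennreal_leI) auto
  also have "\<dots> = ennreal (c2 * unit_ball_vol DIM('a))"
    using \<open>0 \<le> c2\<close> by (simp add: sphere_int_const)
  finally have "c1 * t powr p * r ^ DIM('a) * unit_ball_vol DIM('a) \<le> c2 * unit_ball_vol DIM('a)"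
    using \<open>0 \<le> c2\<close> by (simp add: ennreal_le_iff)
  then show ?thesis using unit_ball_vol_pos[of "DIM('a)"] by simp
qed

lemma Kp_Inf_support_fun_le:
  fixes \<Omega> :: "'a::euclidean_space set"
  assumes \<Omega>: "\<Omega> \<in> Kp S f p" and "p < 0"
    and "0 < c1" and f: "\<And>u. u \<in> sphere 0 1 \<Longrightarrow> c1 \<le> f u \<and> f u \<le> c2"
  shows "Inf (support_fun \<Omega> ` sphere 0 1) \<le> (c1 / c2) powr (1 / p)"
proof (cases "Inf (support_fun \<Omega> ` sphere 0 1) \<le> 0")
  case False
  define m where "m = Inf (support_fun \<Omega> ` sphere 0 1)"
  note K0 = K0D[OF KpD(1)[OF \<Omega>]]
  have "m \<le> support_fun \<Omega> u" if "u \<in> sphere 0 1" for u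
    unfolding m_def using that support_fun_nonneg[OF K0(1,2)]
    by (intro cINF_lower bdd_belowI2[of _ 0]) auto
  then have "c1 \<le> c2 * m powr p"
    using False by (intro Kp_bound_if_support_fun_ge[OF \<Omega> \<open>p < 0\<close> _ _ \<open>0 < c1\<close> f]) (auto simp: m_def)
  moreover have "0 < c2" using le_of_bounds_on_sphere[where f=f, OF f] \<open>0 < c1\<close> by linarith
  ultimately have "c1 / c2 \<le> m powr p"
    by (simp add: pos_divide_le_eq mult.commute)
  then show ?thesis
    using False le_of_bounds_on_sphere[where f=f, OF f] \<open>0 < c1\<close> \<open>p < 0\<close>
    by (intro le_powr_inverse_if_le_powr) (auto simp: m_def)
qed (simp add: order_trans)

lemma Kp_Inf_support_fun_ge:
  fixes \<Omega> :: "'a::euclidean_space set"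
  assumes \<Omega>: "\<Omega> \<in> Kp S f p" and "p < 0" and "0 < R" and R: "\<And>y. y \<in> \<Omega> \<Longrightarrow> norm y \<le> R"
    and r: "0 < r" "r \<le> 1/4"
    and "0 < c1" and f: "\<And>u. u \<in> sphere 0 1 \<Longrightarrow> c1 \<le> f u \<and> f u \<le> c2"
  shows "(c2 / (c1 * r ^ DIM('a))) powr (1 / p) - 4 * R * r \<le> Inf (support_fun \<Omega> ` sphere 0 1)"
proof (rule cInf_greatest)
  show "support_fun \<Omega> ` sphere 0 1 \<noteq> {}" by simp
  fix h assume "h \<in> support_fun \<Omega> ` sphere 0 1"
  then obtain u0 where u0: "norm u0 = 1" and h: "h = support_fun \<Omega> u0" by auto
  note K0 = K0D[OF KpD(1)[OF \<Omega>]]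
  define t where "t = h + 4 * R * r"
  have "0 < 4 * R * r" using \<open>0 < R\<close> r by simp
  then have "0 < t" using support_fun_nonneg[OF K0(1,2)] by (simp add: t_def h add_nonneg_pos)
  have "support_fun \<Omega> u \<le> t" if "norm (u - u0) \<le> 4 * r" for u
  proof -
    have "support_fun \<Omega> u \<le> h + R * norm (u - u0)"
      unfolding h by (rule support_fun_lipschitz[OF K0(3) R])
    also have "R * norm (u - u0) \<le> R * (4 * r)" using that \<open>0 < R\<close> by simp
    finally show ?thesis by (simp add: t_def)
  qed
  then have "c1 * t powr p * r ^ DIM('a) \<le> c2"
    by (intro Kp_bound_if_support_fun_le_on_cap[OF \<Omega> \<open>p < 0\<close> \<open>0 < t\<close> u0 r _ \<open>0 < c1\<close> f])
  then have "t powr p \<le> c2 / (c1 * r ^ DIM('a))"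
    using \<open>0 < c1\<close> r by (simp add: le_divide_eq mult_ac)
  then have "(c2 / (c1 * r ^ DIM('a))) powr (1 / p) \<le> t"
    by (rule powr_inverse_le_if_powr_le[OF \<open>p < 0\<close> \<open>0 < t\<close>])
  then show "(c2 / (c1 * r ^ DIM('a))) powr (1 / p) - 4 * R * r \<le> h" by (simp add: t_def)
qed

lemma Kp_norm_le:
  fixes \<Omega> :: "'a::euclidean_space set"
  assumes S: "orth_subgroup S" and \<Omega>: "\<Omega> \<in> Kp S f p" and "p \<le> -1" and "y \<in> \<Omega>"
    and "0 < \<eta>" and \<eta>: "\<And>a u. a \<in> sphere 0 1 \<Longrightarrow> u \<in> sphere 0 1 \<Longrightarrow> \<exists>\<phi>\<in>S. \<eta> < u \<bullet> \<phi> a"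
    and "0 < c1" and f: "\<And>u. u \<in> sphere 0 1 \<Longrightarrow> c1 \<le> f u \<and> f u \<le> c2"
  shows "norm y \<le> c2 / c1 / \<eta>"
proof -
  define c where "c = norm y * \<eta>"
  have "1 \<le> c2 / c1" using le_of_bounds_on_sphere[where f=f, OF f] \<open>0 < c1\<close> by simp
  have "c \<le> c2 / c1"
  proof (cases "c \<le> 1")
    case False
    have "c \<le> support_fun \<Omega> u" if "u \<in> sphere 0 1" for u
      unfolding c_def using \<eta> that by (intro K0_support_fun_ge_norm[OF S KpD(1)[OF \<Omega>] \<open>y \<in> \<Omega>\<close>])
    then have "c1 \<le> c2 * c powr p"
      using False \<open>p \<le> -1\<close> by (intro Kp_bound_if_support_fun_ge[OF \<Omega> _ _ _ \<open>0 < c1\<close> f]) auto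
    also have "\<dots> \<le> c2 * c powr -1"
      using False \<open>p \<le> -1\<close> \<open>1 \<le> c2 / c1\<close> \<open>0 < c1\<close> by (intro mult_left_mono powr_mono) auto
    finally show ?thesis
      using False \<open>0 < c1\<close> by (simp add: powr_minus field_simps)
  qed (use \<open>1 \<le> c2 / c1\<close> in simp)
  then show ?thesis using \<open>0 < \<eta>\<close> by (metis c_def pos_le_divide_eq)
qed

theorem corollary3p1:
  fixes S :: "('a::euclidean_space \<Rightarrow> 'a) set"
    and f :: "'a \<Rightarrow> real"
    and \<Omega> :: "real \<Rightarrow> 'a set"
    and c1 c2 :: real
  assumes "DIM('a) \<ge> 2"
    and "discrete_orth_subgroup S"
    and "spanning_property S"
    and "f \<in> borel_measurable (restrict_space borel (sphere 0 1))"
    and "\<And>\<phi> x. \<phi> \<in> S \<Longrightarrow> x \<in> sphere 0 1 \<Longrightarrow> f (\<phi> x) = f x"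
    and "0 < c1" and "0 < c2"
    and "\<And>x. x \<in> sphere 0 1 \<Longrightarrow> c1 \<le> f x \<and> f x \<le> c2"
    and "\<And>p. p < - real DIM('a) \<Longrightarrow> is_V_maximizer S f p (\<Omega> p)"
  shows "((\<lambda>p. Inf (support_fun (\<Omega> p) ` sphere 0 1)) \<longlongrightarrow> 1) at_bot"
proof -
  note f = assms(8)
  have S: "orth_subgroup S" using assms(2) by (simp add: discrete_orth_subgroup_def)
  obtain \<eta> where "0 < \<eta>" and \<eta>: "\<And>a u. a \<in> sphere 0 1 \<Longrightarrow> u \<in> sphere 0 1 \<Longrightarrow> \<exists>\<phi>\<in>S. \<eta> < u \<bullet> \<phi> a"
    using orbit_meets_halfspace_uniformly[OF S assms(3)] by blast
  define R where "R = c2 / c1 / \<eta>"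
  have "0 < R" using assms(6,7) \<open>0 < \<eta>\<close> by (simp add: R_def)
  have \<Omega>: "\<Omega> p \<in> Kp S f p" and "\<And>y. y \<in> \<Omega> p \<Longrightarrow> norm y \<le> R" if "p \<le> - real DIM('a) - 4" for p
    using that assms(9)[of p] Kp_norm_le[OF S _ _ _ \<open>0 < \<eta>\<close> \<eta> assms(6) f]
    by (auto simp: is_V_maximizer_def R_def)
  then have "\<forall>\<^sub>F p in at_bot. (c2 / (c1 * (-1 / p) ^ DIM('a))) powr (1 / p) - 4 * R * (-1 / p)
      \<le> Inf (support_fun (\<Omega> p) ` sphere 0 1)"
    unfolding eventually_at_bot_linorder
    by (intro exI[of _ "- real DIM('a) - 4"] allI impI Kp_Inf_support_fun_ge[OF _ _ \<open>0 < R\<close> _ _ _ assms(6) f])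
      (auto simp: field_simps)
  moreover have "\<forall>\<^sub>F p in at_bot. Inf (support_fun (\<Omega> p) ` sphere 0 1) \<le> (c1 / c2) powr (1 / p)"
    using \<Omega> unfolding eventually_at_bot_linorder
    by (intro exI[of _ "- real DIM('a) - 4"] allI impI Kp_Inf_support_fun_le[OF _ _ assms(6) f]) auto
  moreover have "((\<lambda>p. (c2 / (c1 * (-1 / p) ^ DIM('a))) powr (1 / p) - 4 * R * (-1 / p)) \<longlongrightarrow> 1) at_bot"
    using assms(6,7) by real_asymp
  moreover have "((\<lambda>p. (c1 / c2) powr (1 / p)) \<longlongrightarrow> 1) at_bot"
    using assms(6,7) by real_asymp
  ultimately show ?thesis by (rule tendsto_sandwich)
qed

end
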